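(* Let $\mathcal A\in\mathbb Q^{n_1\times m\times n_3}$ and $\mathcal B\in\mathbb Q^{m\times n_2\times n_3}$. Then: (1) if $n_1=m$, then $\rho_{QT}(\mathcal A)\le \|\mathcal A\|_s$; (2) $\|\mathcal A*_Q\mathcal B\|_s\le \|\mathcal A\|_s\|\mathcal B\|_s$; (3) $(\mathcal A*_Q\mathcal B)^*=\mathcal B^**_Q\mathcal A^*$; (4) $(\mathcal A*_Q\mathcal B)*_Q\mathcal C=\mathcal A*_Q(\mathcal B*_Q\mathcal C)$ for every $\mathcal C\in\mathbb Q^{n_2\times n\times n_3}$; (5) $\mathcal A*_Q(\mathcal B+\mathcal C)=\mathcal A*_Q\mathcal B+\mathcal A*_Q\mathcal C$ for every $\mathcal C\in\mathbb Q^{m\times n_2\times n_3}$.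
   Context: $\mathbb Q$ denotes the real quaternions $a=a_0+a_1\mathbf i+a_2\mathbf j+a_3\mathbf k$ ($a_t\in\mathbb R$, $\mathbf i^2=\mathbf j^2=\mathbf k^2=-1$, $\mathbf{ij}=\mathbf k=-\mathbf{ji}$, $\mathbf{jk}=\mathbf i=-\mathbf{kj}$, $\mathbf{ki}=\mathbf j=-\mathbf{ik}$), with conjugate $a^*=a_0-a_1\mathbf i-a_2\mathbf j-a_3\mathbf k$ and $|a|=\sqrt{a^*a}$; $\mathbb C$ is identified with $\{a_0+a_1\mathbf i\}$. Every quaternion array $A=A_0+A_1\mathbf i+A_2\mathbf j+A_3\mathbf k$ (real $A_t$) is written uniquely as $A=A_{\mathbf d}+\mathbf jA_{\mathbf c}$ with $A_{\mathbf d}=A_0+A_1\mathbf i$, $A_{\mathbf c}=A_2-A_3\mathbf i$ complex. For a tensor $\mathcal A\in\mathbb Q^{n_1\times n_2\times n_3}$, $\mathcal A^{(s)}$ is its $s$-th frontal slice $\mathcal A(:,:,s)$. For a complex tensor $\mathcal C\in\mathbb C^{n_1\times n_2\times n_3}$, $\mathtt{bcirc}(\mathcal C)\in\mathbb C^{n_1n_3\times n_2n_3}$ is the block circulant matrix whose $(p,q)$ block ($1\le p,q\le n_3$) is $\mathcal C^{(((p-q)\bmod n_3)+1)}$. $P_{n_3}$ is the $n_3\times n_3$ permutation matrix whose first row is $e_1^T$ and whose $r$-th row, $r\ge2$, is $e_{n_3+2-r}^T$. The $z$-block circulant matrix of $\mathcal A=\mathcal A_{\mathbf d}+\mathbf j\mathcal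 A_{\mathbf c}$ is $\mathtt{bcirc_z}(\mathcal A)=\mathtt{bcirc}(\mathcal A_{\mathbf d})+\mathbf j\,\mathtt{bcirc}(\mathcal A_{\mathbf c})(P_{n_3}\otimes I_{n_2})\in\mathbb Q^{n_1n_3\times n_2n_3}$. $\mathtt{unfold}(\mathcal B)=[\mathcal B^{(1)};\dots;\mathcal B^{(n_3)}]$ (block column) and $\mathtt{fold}$ is its inverse. The QT-product of $\mathcal A\in\mathbb Q^{n_1\times r\times n_3}$ and $\mathcal B\in\mathbb Q^{r\times n_2\times n_3}$ is $\mathcal A*_Q\mathcal B=\mathtt{fold}(\mathtt{bcirc_z}(\mathcal A)\,\mathtt{unfold}(\mathcal B))\in\mathbb Q^{n_1\times n_2\times n_3}$. For a complex tensor $\mathcal C\in\mathbb C^{n_1\times n_2\times n_3}$, $\mathcal C^*\in\mathbb C^{n_2\times n_1\times n_3}$ has frontal slices $(\mathcal C^{(1)})^*$ and $(\mathcal C^* )^{(s)}=(\mathcal C^{(n_3+2-s)})^*$ for $s\ge2$. The conjugate transpose of $\mathcal A=\mathcal A_{\mathbf d}+\mathbf j\mathcal A_{\mathbf c}\in\mathbb Q^{n_1\times n_2\times n_3}$ is the tensor $\mathcal A^*\in\mathbb Q^{n_2\times n_1\times n_3}$ with $\mathtt{unfold}(\mathcal A^* )=\mathtt{unfold}(\mathcal A_{\mathbf d}^* )-(P_{n_3}\otimes I_{n_2})\mathtt{unfold}(\mathcal A_{\mathbf c}^* )\mathbf j$. For a quaternion matrix $M$, $\|M\|_2=\max_{\|x\|=1}\|Mx\|$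 (Euclidean norm $\|x\|=(\sum|x_i|^2)^{1/2}$ on quaternion vectors); a right eigenvalue of a square $M$ is $\lambda\in\mathbb Q$ with $Mx=x\lambda$ for some $x\ne0$, and $\rho(M)$ is the maximum of $|\lambda|$ over right eigenvalues. QT-spectral norm: $\|\mathcal A\|_s=\|\mathtt{bcirc_z}(\mathcal A)\|_2$; QT-spectral radius (square frontal slices): $\rho_{QT}(\mathcal A)=\rho(\mathtt{bcirc_z}(\mathcal A))$. *)

theory Defs
  imports "HOL-Analysis.Analysis"
begin

datatype quat = Quat (qre: real) (qi: real) (qj_c: real) (qk: real)

instantiation quat :: ring_1
begin
definition "0 = Quat 0 0 0 0"
definition "1 = Quat 1 0 0 0"
definition "a + b = Quat (qre a + qre b) (qi a + qi b) (qj_c a + qj_c b) (qk a + qk b)"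
definition "a - b = Quat (qre a - qre b) (qi a - qi b) (qj_c a - qj_c b) (qk a - qk b)"
definition "- a = Quat (- qre a) (- qi a) (- qj_c a) (- qk a)"
text \<open>Hamilton product (ij = k, jk = i, ki = j, i^2 = j^2 = k^2 = -1).\<close>
definition "a * b = Quat
   (qre a * qre b - qi a * qi b - qj_c a * qj_c b - qk a * qk b)
   (qre a * qi b + qi a * qre b + qj_c a * qk b - qk a * qj_c b)
   (qre a * qj_c b - qi a * qk b + qj_c a * qre b + qk a * qi b)
   (qre a * qk b + qi a * qj_c b - qj_c a * qi b + qk a * qre b)"
instance
  by standard (auto simp: zero_quat_def one_quat_def plus_quat_def minus_quat_def
      uminus_quat_def times_quat_def algebra_simps intro: quat.expand)
end

definition qconj :: "quat \<Rightarrow> quat" where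
  "qconj a = Quat (qre a) (- qi a) (- qj_c a) (- qk a)"

definition qabs :: "quat \<Rightarrow> real" where
  "qabs a = sqrt ((qre a)\<^sup>2 + (qi a)\<^sup>2 + (qj_c a)\<^sup>2 + (qk a)\<^sup>2)"

definition of_cplx :: "complex \<Rightarrow> quat" where
  "of_cplx z = Quat (Re z) (Im z) 0 0"

definition qunit_j :: quat where "qunit_j = Quat 0 0 1 0"

text \<open>a = a_d + j a_c with a_d = a0 + a1 i, a_c = a2 - a3 i.\<close>
definition qdpart :: "quat \<Rightarrow> complex" where "qdpart a = Complex (qre a) (qi a)"
definition qcpart :: "quat \<Rightarrow> complex" where "qcpart a = Complex (qj_c a) (- qk a)"

section \<open>Matrices and tensors (0-based indices, explicit dimensions)\<close>

type_synonym 'a mat = "nat \<Rightarrow> nat \<Rightarrow> 'a"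
type_synonym 'a tens = "nat \<Rightarrow> nat \<Rightarrow> nat \<Rightarrow> 'a"

definition mmul :: "nat \<Rightarrow> ('a::semiring_0) mat \<Rightarrow> 'a mat \<Rightarrow> 'a mat" where
  "mmul k M N = (\<lambda>i j. \<Sum>l<k. M i l * N l j)"

definition idm :: "('a::{zero,one}) mat" where
  "idm = (\<lambda>i j. if i = j then 1 else 0)"

definition kron :: "nat \<Rightarrow> nat \<Rightarrow> ('a::times) mat \<Rightarrow> 'a mat \<Rightarrow> 'a mat" where
  "kron p q P Q = (\<lambda>r c. P (r div p) (c div q) * Q (r mod p) (c mod q))"

text \<open>P_{n3}: row 1 is e_1^T, row r >= 2 is e_{n3+2-r}^T; 0-based: row r is e_{(n3-r) mod n3}.\<close>
definition Pmat :: "nat \<Rightarrow> ('a::{zero,one}) mat" where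
  "Pmat n3 = (\<lambda>r c. if c = (n3 - r) mod n3 then 1 else 0)"

definition bcirc :: "nat \<Rightarrow> nat \<Rightarrow> nat \<Rightarrow> complex tens \<Rightarrow> complex mat" where
  "bcirc n1 n2 n3 C = (\<lambda>r c. C (r mod n1) (c mod n2) ((r div n1 + n3 - c div n2) mod n3))"

definition tdpart :: "quat tens \<Rightarrow> complex tens" where
  "tdpart A = (\<lambda>i j s. qdpart (A i j s))"
definition tcpart :: "quat tens \<Rightarrow> complex tens" where
  "tcpart A = (\<lambda>i j s. qcpart (A i j s))"

definition bcirc_z :: "nat \<Rightarrow> nat \<Rightarrow> nat \<Rightarrow> quat tens \<Rightarrow> quat mat" where
  "bcirc_z n1 n2 n3 A = (\<lambda>r c.
      of_cplx (bcirc n1 n2 n3 (tdpart A) r c)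
    + qunit_j * of_cplx (mmul (n2 * n3) (bcirc n1 n2 n3 (tcpart A)) (kron n2 n2 (Pmat n3) idm) r c))"

text \<open>unfold(B) = [B^(1); ...; B^(n3)] for B with n1 rows; fold is its inverse.\<close>
definition tunfold :: "nat \<Rightarrow> 'a tens \<Rightarrow> 'a mat" where
  "tunfold n1 B = (\<lambda>r c. B (r mod n1) c (r div n1))"
definition tfold :: "nat \<Rightarrow> 'a mat \<Rightarrow> 'a tens" where
  "tfold n1 M = (\<lambda>i j s. M (s * n1 + i) j)"

definition qtprod :: "nat \<Rightarrow> nat \<Rightarrow> nat \<Rightarrow> nat \<Rightarrow> quat tens \<Rightarrow> quat tens \<Rightarrow> quat tens" where
  "qtprod n1 r n2 n3 A B = tfold n1 (mmul (r * n3) (bcirc_z n1 r n3 A) (tunfold r B))"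

definition ctconjT :: "nat \<Rightarrow> complex tens \<Rightarrow> complex tens" where
  "ctconjT n3 C = (\<lambda>i j s. cnj (C j i ((n3 - s) mod n3)))"

definition qtconjT :: "nat \<Rightarrow> nat \<Rightarrow> quat tens \<Rightarrow> quat tens" where
  "qtconjT n2 n3 A = tfold n2 (\<lambda>r c.
      of_cplx (tunfold n2 (ctconjT n3 (tdpart A)) r c)
    - of_cplx (mmul (n2 * n3) (kron n2 n2 (Pmat n3) idm) (tunfold n2 (ctconjT n3 (tcpart A))) r c)
      * qunit_j)"

definition mvmul :: "nat \<Rightarrow> quat mat \<Rightarrow> (nat \<Rightarrow> quat) \<Rightarrow> nat \<Rightarrow> quat" where
  "mvmul n M x = (\<lambda>i. \<Sum>l<n. M i l * x l)"

definition vnorm :: "nat \<Rightarrow> (nat \<Rightarrow> quat) \<Rightarrow> real" where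
  "vnorm n x = sqrt (\<Sum>i<n. (qabs (x i))\<^sup>2)"

definition spec_norm :: "nat \<Rightarrow> nat \<Rightarrow> quat mat \<Rightarrow> real" where
  "spec_norm m n M = Sup {vnorm m (mvmul n M x) | x. vnorm n x = 1}"

definition right_eigenvalue :: "nat \<Rightarrow> quat mat \<Rightarrow> quat \<Rightarrow> bool" where
  "right_eigenvalue n M lam \<longleftrightarrow>
     (\<exists>x. (\<exists>i<n. x i \<noteq> 0) \<and> (\<forall>i<n. mvmul n M x i = x i * lam))"

definition spec_radius :: "nat \<Rightarrow> quat mat \<Rightarrow> real" where
  "spec_radius n M = Sup {qabs lam | lam. right_eigenvalue n M lam}"

definition qt_norm :: "nat \<Rightarrow> nat \<Rightarrow> nat \<Rightarrow> quat tens \<Rightarrow> real" where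
  "qt_norm n1 n2 n3 A = spec_norm (n1 * n3) (n2 * n3) (bcirc_z n1 n2 n3 A)"

definition qt_radius :: "nat \<Rightarrow> nat \<Rightarrow> quat tens \<Rightarrow> real" where
  "qt_radius n n3 A = spec_radius (n * n3) (bcirc_z n n n3 A)"

end

(* The z-block circulant representation is multiplicative and commutes with conjugate
   transposition.  Split every quaternion as a = a_d + j a_c; then block (p, q) of bcirc_z A is
   the even part of slice p - q plus the odd part of slice p + q (slices counted mod n3), and
   since j z = cnj z j the blocks of bcirc_z A * bcirc_z B are cyclic convolutions of exactly
   this shape, namely those of A *_Q B.  As A is the first block column of bcirc_z A, and
   A *_Q B is bcirc_z A times the first block column of bcirc_z B, associativity,
   distributivity and the rule for the conjugate transpose reduce to matrix identities, and the
   norm bound to submultiplicativity of the spectral norm.  Finally, every right eigenvalue is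
   bounded by the spectral norm, and right eigenvalues exist because each complex eigenvalue of
   the complex adjoint matrix is one. *)

theory Submission
  imports Defs "Jordan_Normal_Form.Spectral_Radius"
begin

section \<open>Even and odd parts of quaternions\<close>

lemma quat_eqI:
  "qre a = qre b \<Longrightarrow> qi a = qi b \<Longrightarrow> qj_c a = qj_c b \<Longrightarrow> qk a = qk b \<Longrightarrow> a = b"
  by (cases a; cases b) simp

lemma quat_selectors [simp]:
  "qre 0 = 0" "qi 0 = 0" "qj_c 0 = 0" "qk 0 = 0"
  "qre (a + b) = qre a + qre b" "qi (a + b) = qi a + qi b"
  "qj_c (a + b) = qj_c a + qj_c b" "qk (a + b) = qk a + qk b"
  "qre (a - b) = qre a - qre b" "qi (a - b) = qi a - qi b"
  "qj_c (a - b) = qj_c a - qj_c b" "qk (a - b) = qk a - qk b"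
  "qre (- a) = - qre a" "qi (- a) = - qi a" "qj_c (- a) = - qj_c a" "qk (- a) = - qk a"
  "qre (a * b) = qre a * qre b - qi a * qi b - qj_c a * qj_c b - qk a * qk b"
  "qi (a * b) = qre a * qi b + qi a * qre b + qj_c a * qk b - qk a * qj_c b"
  "qj_c (a * b) = qre a * qj_c b - qi a * qk b + qj_c a * qre b + qk a * qi b"
  "qk (a * b) = qre a * qk b + qi a * qj_c b - qj_c a * qi b + qk a * qre b"
  by (simp_all add: zero_quat_def plus_quat_def minus_quat_def uminus_quat_def times_quat_def)

lemma quat_sum_selectors [simp]:
  "qre (sum f A) = (\<Sum>x\<in>A. qre (f x))" "qi (sum f A) = (\<Sum>x\<in>A. qi (f x))"
  "qj_c (sum f A) = (\<Sum>x\<in>A. qj_c (f x))" "qk (sum f A) = (\<Sum>x\<in>A. qk (f x))"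
  by (induction A rule: infinite_finite_induct; simp)+

lemma of_cplx_selectors [simp]:
  "qre (of_cplx z) = Re z" "qi (of_cplx z) = Im z" "qj_c (of_cplx z) = 0" "qk (of_cplx z) = 0"
  and qunit_j_selectors [simp]:
  "qre qunit_j = 0" "qi qunit_j = 0" "qj_c qunit_j = 1" "qk qunit_j = 0"
  and qconj_selectors [simp]:
  "qre (qconj a) = qre a" "qi (qconj a) = - qi a" "qj_c (qconj a) = - qj_c a" "qk (qconj a) = - qk a"
  by (simp_all add: of_cplx_def qunit_j_def qconj_def)

lemma qconj_0 [simp]: "qconj 0 = 0"
  by (rule quat_eqI) simp_all

lemma qconj_add: "qconj (a + b) = qconj a + qconj b"
  and qconj_mult: "qconj (a * b) = qconj b * qconj a"
  and qconj_sum: "qconj (sum f A) = (\<Sum>x\<in>A. qconj (f x))"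
  by (rule quat_eqI; simp add: algebra_simps sum_negf)+

definition dpart :: "quat \<Rightarrow> quat" where
  "dpart a = of_cplx (qdpart a)"

definition jpart :: "quat \<Rightarrow> quat" where
  "jpart a = qunit_j * of_cplx (qcpart a)"

lemma dpart_selectors [simp]:
  "qre (dpart a) = qre a" "qi (dpart a) = qi a" "qj_c (dpart a) = 0" "qk (dpart a) = 0"
  and jpart_selectors [simp]:
  "qre (jpart a) = 0" "qi (jpart a) = 0" "qj_c (jpart a) = qj_c a" "qk (jpart a) = qk a"
  by (simp_all add: dpart_def jpart_def qdpart_def qcpart_def)

lemma dpart_plus_jpart: "dpart a + jpart a = a"
  by (rule quat_eqI) simp_all

lemma dpart_add: "dpart (a + b) = dpart a + dpart b"
  and jpart_add: "jpart (a + b) = jpart a + jpart b"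
  and dpart_sum: "dpart (sum f A) = (\<Sum>x\<in>A. dpart (f x))"
  and jpart_sum: "jpart (sum f A) = (\<Sum>x\<in>A. jpart (f x))"
  and dpart_qconj: "dpart (qconj a) = qconj (dpart a)"
  and jpart_qconj: "jpart (qconj a) = qconj (jpart a)"
  by (rule quat_eqI; simp)+

text \<open>The quaternions are graded by \<open>dpart\<close> (even) and \<open>jpart\<close> (odd), since \<open>j z = cnj z j\<close>.\<close>

lemma dpart_mult: "dpart (a * b) = dpart a * dpart b + jpart a * jpart b"
  and jpart_mult: "jpart (a * b) = dpart a * jpart b + jpart a * dpart b"
  by (rule quat_eqI; simp)+

lemma dpart_idem [simp]: "dpart (dpart a) = dpart a"
  and dpart_jpart [simp]: "dpart (jpart a) = 0"
  and jpart_dpart [simp]: "jpart (dpart a) = 0"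
  and jpart_idem [simp]: "jpart (jpart a) = jpart a"
  by (rule quat_eqI; simp)+

section \<open>Cyclic slice indices and the z-block circulant matrix\<close>

definition cyc :: "nat \<Rightarrow> int \<Rightarrow> nat" where
  "cyc n z = nat (z mod int n)"

lemma cyc_less: "0 < n \<Longrightarrow> cyc n z < n"
  by (simp add: cyc_def nat_less_iff)

lemma cyc_of_nat: "u < n \<Longrightarrow> cyc n (int u) = u"
  by (simp add: cyc_def zmod_int[symmetric])

lemma cyc_reduce:
  assumes "0 < n"
  shows "cyc n (int (cyc n a)) = cyc n a"
    "cyc n (int (cyc n a) + b) = cyc n (a + b)" "cyc n (b + int (cyc n a)) = cyc n (b + a)"
    "cyc n (int (cyc n a) - b) = cyc n (a - b)" "cyc n (b - int (cyc n a)) = cyc n (b - a)"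
    "cyc n (- int (cyc n a)) = cyc n (- a)"
  using assms by (simp_all add: cyc_def mod_simps nat_mod_as_int)

lemma cyc_neg_eq_iff:
  assumes "u < n" "v < n"
  shows "cyc n (- int u) = v \<longleftrightarrow> u = cyc n (- int v)"
proof -
  have "0 < n" using assms by simp
  then have "cyc n (- int (cyc n (- int w))) = w" if "w < n" for w
    using that by (simp add: cyc_reduce cyc_of_nat)
  then show ?thesis
    using assms by metis
qed

lemma nat_mod_diff_eq_cyc:
  assumes "q \<le> n"
  shows "(p + n - q) mod n = cyc n (int p - int q)"
proof -
  have "int ((p + n - q) mod n) = (int p - int q + int n) mod int n"
    using assms by (simp add: zmod_int of_nat_diff algebra_simps)
  then show ?thesis
    by (simp add: cyc_def)
qed

lemma sum_cyc_shift:
  assumes "0 < n"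
  shows "(\<Sum>t<n. f t) = (\<Sum>u<n. f (cyc n (int u + e)))"
  by (rule sum.reindex_bij_witness[where j = "\<lambda>t. cyc n (int t - e)" and i = "\<lambda>u. cyc n (int u + e)"])
    (use assms in \<open>auto simp: cyc_less cyc_of_nat cyc_reduce\<close>)

lemma sum_lessThan_blocks:
  fixes m n :: nat
  shows "(\<Sum>l<m * n. g l) = (\<Sum>u<n. \<Sum>k<m. g (u * m + k))"
proof -
  have "(\<Sum>l<m * n. g l) = (\<Sum>u<n. sum g {u * m..<u * m + m})"
    using sum.nat_group[of g m n] by (simp add: mult.commute)
  also have "\<dots> = (\<Sum>u<n. \<Sum>k<m. g (u * m + k))"
  proof (rule sum.cong[OF refl])
    fix u
    show "sum g {u * m..<u * m + m} = (\<Sum>k<m. g (u * m + k))"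
      using sum.shift_bounds_nat_ivl[of g 0 "u * m" m] by (simp add: atLeast0LessThan add.commute)
  qed
  finally show ?thesis .
qed

lemma block_index_less:
  fixes u k m n :: nat
  assumes "u < n" and "k < m"
  shows "u * m + k < m * n"
proof -
  have "u * m + k < (u + 1) * m"
    using assms(2) by simp
  also have "\<dots> \<le> n * m"
    using assms(1) by (intro mult_right_mono) auto
  finally show ?thesis
    by (simp add: mult.commute)
qed

lemma block_index_eq_iff:
  fixes b :: nat
  assumes "k < b"
  shows "q * b + k = c \<longleftrightarrow> q = c div b \<and> k = c mod b"
  using assms by (auto simp: div_mult_mod_eq)

text \<open>The permutation matrix \<open>P\<^sub>n \<otimes> I\<^sub>b\<close> maps block row \<open>p\<close> to block row \<open>-p mod n\<close>.\<close>

definition block_reflect :: "nat \<Rightarrow> nat \<Rightarrow> nat \<Rightarrow> nat" where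
  "block_reflect b n r = cyc n (- int (r div b)) * b + r mod b"

lemma block_reflect_less: "0 < b \<Longrightarrow> 0 < n \<Longrightarrow> block_reflect b n r < b * n"
  by (simp add: block_reflect_def block_index_less cyc_less)

lemma block_reflect_eq_iff:
  assumes b: "0 < b" and l: "l < b * n" and c: "c < b * n"
  shows "block_reflect b n l = c \<longleftrightarrow> l = block_reflect b n c"
proof -
  have "l div b < n" "c div b < n"
    using l c by (simp_all add: less_mult_imp_div_less mult.commute)
  then have "block_reflect b n l = c \<longleftrightarrow> l div b = cyc n (- int (c div b)) \<and> l mod b = c mod b"
    using b by (auto simp: block_reflect_def block_index_eq_iff cyc_neg_eq_iff)
  also have "\<dots> \<longleftrightarrow> l = block_reflect b n c"
    using b by (auto simp: block_reflect_def eq_commute[of l] block_index_eq_iff)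
  finally show ?thesis .
qed

lemma kron_Pmat_idm:
  assumes "0 < b" and "l < b * n"
  shows "(kron b b (Pmat n) idm l c :: 'a :: semiring_1) = (if block_reflect b n l = c then 1 else 0)"
proof -
  have "l div b \<le> n"
    using assms by (simp add: less_mult_imp_div_less mult.commute less_imp_le)
  then have "(n - l div b) mod n = cyc n (- int (l div b))"
    using nat_mod_diff_eq_cyc[of "l div b" n 0] by simp
  moreover have "block_reflect b n l = c \<longleftrightarrow> c div b = cyc n (- int (l div b)) \<and> c mod b = l mod b"
    using assms by (auto simp: block_reflect_def block_index_eq_iff)
  ultimately show ?thesis
    by (auto simp: kron_def Pmat_def idm_def)
qed

lemma mmul_kron_Pmat_left:
  fixes M :: "nat \<Rightarrow> nat \<Rightarrow> 'a :: semiring_1"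
  assumes "0 < b" and "r < b * n"
  shows "mmul (b * n) (kron b b (Pmat n) idm) M r c = M (block_reflect b n r) c"
proof -
  have "mmul (b * n) (kron b b (Pmat n) idm) M r c
      = (\<Sum>l<b * n. if block_reflect b n r = l then M l c else 0)"
    unfolding mmul_def by (intro sum.cong refl) (simp add: kron_Pmat_idm assms)
  then show ?thesis
    using assms block_reflect_less[of b n r] by (cases "n = 0") simp_all
qed

lemma mmul_kron_Pmat_right:
  fixes M :: "nat \<Rightarrow> nat \<Rightarrow> 'a :: semiring_1"
  assumes "0 < b" and "c < b * n"
  shows "mmul (b * n) M (kron b b (Pmat n) idm) r c = M r (block_reflect b n c)"
proof -
  have "mmul (b * n) M (kron b b (Pmat n) idm) r c
      = (\<Sum>l<b * n. if l = block_reflect b n c then M r l else 0)"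
    unfolding mmul_def by (intro sum.cong refl) (simp add: kron_Pmat_idm block_reflect_eq_iff assms)
  then show ?thesis
    using assms block_reflect_less[of b n c] by (cases "n = 0") simp_all
qed

lemma bcirc_z_entry:
  assumes b: "0 < n2" and n3: "0 < n3" and c: "c < n2 * n3"
  shows "bcirc_z n1 n2 n3 A r c =
      dpart (A (r mod n1) (c mod n2) (cyc n3 (int (r div n1) - int (c div n2))))
    + jpart (A (r mod n1) (c mod n2) (cyc n3 (int (r div n1) + int (c div n2))))"
proof -
  have "c div n2 < n3"
    using c by (simp add: less_mult_imp_div_less mult.commute)
  then show ?thesis
    using b n3 cyc_less[OF n3]
    by (simp add: bcirc_z_def mmul_kron_Pmat_right[OF b c] bcirc_def tdpart_def tcpart_def
        dpart_def jpart_def block_reflect_def nat_mod_diff_eq_cyc less_imp_le cyc_reduce)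
qed

lemma bcirc_z_block_entry:
  assumes "i < n1" "j < n2" "q < n3"
  shows "bcirc_z n1 n2 n3 A (p * n1 + i) (q * n2 + j) =
      dpart (A i j (cyc n3 (int p - int q))) + jpart (A i j (cyc n3 (int p + int q)))"
  using assms by (simp add: bcirc_z_entry block_index_less)

lemma bcirc_z_first_block_column:
  assumes "i < n1" "j < n2" "s < n3"
  shows "bcirc_z n1 n2 n3 A (s * n1 + i) j = A i j s"
  using bcirc_z_block_entry[where p = s and q = 0 and A = A] assms
  by (simp add: cyc_of_nat dpart_plus_jpart)

section \<open>Algebra of the QT-product\<close>

lemma mmul_assoc: "mmul k (mmul l M N) P = mmul l M (mmul k N P)"
  by (simp add: mmul_def fun_eq_iff sum_distrib_left sum_distrib_right mult.assoc
      sum.swap[of _ "{..<k}"])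

lemma mmul_cong:
  "(\<And>l. l < k \<Longrightarrow> M r l = M' r l) \<Longrightarrow> (\<And>l. l < k \<Longrightarrow> N l c = N' l c) \<Longrightarrow>
    mmul k M N r c = mmul k M' N' r c"
  by (simp add: mmul_def)

lemma qtprod_eq_mmul_bcirc_z:
  assumes "0 < m" "i < n1" "j < n2" "s < n3"
  shows "qtprod n1 m n2 n3 A B i j s
    = mmul (m * n3) (bcirc_z n1 m n3 A) (bcirc_z m n2 n3 B) (s * n1 + i) j"
proof -
  have "B (l mod m) j (l div m) = bcirc_z m n2 n3 B l j" if "l < m * n3" for l
    using bcirc_z_first_block_column[of "l mod m" m j n2 "l div m" n3 B] assms that
    by (simp add: less_mult_imp_div_less mult.commute)
  then show ?thesis
    by (simp add: qtprod_def tfold_def tunfold_def mmul_def)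
qed

lemma qtprod_eq_cyclic_convolution:
  assumes "0 < n3" "i < n1"
  shows "qtprod n1 m n2 n3 A B i j s = (\<Sum>t<n3. \<Sum>k<m.
    (dpart (A i k (cyc n3 (int s - int t))) + jpart (A i k (cyc n3 (int s + int t)))) * B k j t)"
  using assms
  by (simp add: qtprod_def tfold_def tunfold_def mmul_def sum_lessThan_blocks bcirc_z_block_entry)

text \<open>The even and odd parts of a slice of \<open>A *\<^sub>Q B\<close> are cyclic convolutions; shifting the
  summation index by \<open>\<plusminus>q\<close> brings them into the shape of a block of \<open>bcirc_z A * bcirc_z B\<close>.\<close>

lemma dpart_qtprod_shifted:
  assumes n3: "0 < n3" and "i < n1"
  shows "dpart (qtprod n1 m n2 n3 A B i j (cyc n3 (p - q))) =
      (\<Sum>u<n3. \<Sum>k<m. dpart (A i k (cyc n3 (p - int u))) * dpart (B k j (cyc n3 (int u - q))))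
    + (\<Sum>u<n3. \<Sum>k<m. jpart (A i k (cyc n3 (p + int u))) * jpart (B k j (cyc n3 (int u + q))))"
proof -
  let ?s = "cyc n3 (p - q)"
  have "dpart (qtprod n1 m n2 n3 A B i j ?s) =
      (\<Sum>t<n3. \<Sum>k<m. dpart (A i k (cyc n3 (int ?s - int t))) * dpart (B k j t))
    + (\<Sum>t<n3. \<Sum>k<m. jpart (A i k (cyc n3 (int ?s + int t))) * jpart (B k j t))"
    using assms by (simp add: qtprod_eq_cyclic_convolution dpart_sum dpart_mult dpart_add jpart_add
        sum.distrib)
  also have "(\<Sum>t<n3. \<Sum>k<m. dpart (A i k (cyc n3 (int ?s - int t))) * dpart (B k j t))
      = (\<Sum>u<n3. \<Sum>k<m. dpart (A i k (cyc n3 (p - int u))) * dpart (B k j (cyc n3 (int u - q))))"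
    by (subst sum_cyc_shift[OF n3, of _ "- q"], intro sum.cong refl)
      (use n3 in \<open>simp add: cyc_reduce; simp add: algebra_simps\<close>)
  also have "(\<Sum>t<n3. \<Sum>k<m. jpart (A i k (cyc n3 (int ?s + int t))) * jpart (B k j t))
      = (\<Sum>u<n3. \<Sum>k<m. jpart (A i k (cyc n3 (p + int u))) * jpart (B k j (cyc n3 (int u + q))))"
    by (subst sum_cyc_shift[OF n3, of _ q], intro sum.cong refl)
      (use n3 in \<open>simp add: cyc_reduce; simp add: algebra_simps\<close>)
  finally show ?thesis .
qed

lemma jpart_qtprod_shifted:
  assumes n3: "0 < n3" and "i < n1"
  shows "jpart (qtprod n1 m n2 n3 A B i j (cyc n3 (p + q))) =
      (\<Sum>u<n3. \<Sum>k<m. dpart (A i k (cyc n3 (p - int u))) * jpart (B k j (cyc n3 (int u + q))))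
    + (\<Sum>u<n3. \<Sum>k<m. jpart (A i k (cyc n3 (p + int u))) * dpart (B k j (cyc n3 (int u - q))))"
proof -
  let ?s = "cyc n3 (p + q)"
  have "jpart (qtprod n1 m n2 n3 A B i j ?s) =
      (\<Sum>t<n3. \<Sum>k<m. dpart (A i k (cyc n3 (int ?s - int t))) * jpart (B k j t))
    + (\<Sum>t<n3. \<Sum>k<m. jpart (A i k (cyc n3 (int ?s + int t))) * dpart (B k j t))"
    using assms by (simp add: qtprod_eq_cyclic_convolution jpart_sum jpart_mult dpart_add jpart_add
        sum.distrib)
  also have "(\<Sum>t<n3. \<Sum>k<m. dpart (A i k (cyc n3 (int ?s - int t))) * jpart (B k j t))
      = (\<Sum>u<n3. \<Sum>k<m. dpart (A i k (cyc n3 (p - int u))) * jpart (B k j (cyc n3 (int u + q))))"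
    by (subst sum_cyc_shift[OF n3, of _ q], intro sum.cong refl)
      (use n3 in \<open>simp add: cyc_reduce; simp add: algebra_simps\<close>)
  also have "(\<Sum>t<n3. \<Sum>k<m. jpart (A i k (cyc n3 (int ?s + int t))) * dpart (B k j t))
      = (\<Sum>u<n3. \<Sum>k<m. jpart (A i k (cyc n3 (p + int u))) * dpart (B k j (cyc n3 (int u - q))))"
    by (subst sum_cyc_shift[OF n3, of _ "- q"], intro sum.cong refl)
      (use n3 in \<open>simp add: cyc_reduce; simp add: algebra_simps\<close>)
  finally show ?thesis .
qed

lemma bcirc_z_qtprod:
  assumes "0 < n1" "0 < m" "0 < n2" "0 < n3" "r < n1 * n3" "c < n2 * n3"
  shows "bcirc_z n1 n2 n3 (qtprod n1 m n2 n3 A B) r c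
    = mmul (m * n3) (bcirc_z n1 m n3 A) (bcirc_z m n2 n3 B) r c"
proof -
  define i p j q where "i = r mod n1" and "p = r div n1" and "j = c mod n2" and "q = c div n2"
  have ijq: "i < n1" "j < n2" "q < n3"
    using assms by (auto simp: i_def j_def q_def less_mult_imp_div_less mult.commute)
  have rc: "r = p * n1 + i" "c = q * n2 + j"
    by (simp_all add: i_def p_def j_def q_def)
  have "mmul (m * n3) (bcirc_z n1 m n3 A) (bcirc_z m n2 n3 B) r c
     = (\<Sum>u<n3. \<Sum>k<m.
         (dpart (A i k (cyc n3 (int p - int u))) + jpart (A i k (cyc n3 (int p + int u))))
       * (dpart (B k j (cyc n3 (int u - int q))) + jpart (B k j (cyc n3 (int u + int q)))))"
    unfolding mmul_def sum_lessThan_blocks rc using ijq by (simp add: bcirc_z_block_entry)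
  moreover have "bcirc_z n1 n2 n3 (qtprod n1 m n2 n3 A B) r c
      = dpart (qtprod n1 m n2 n3 A B i j (cyc n3 (int p - int q)))
      + jpart (qtprod n1 m n2 n3 A B i j (cyc n3 (int p + int q)))"
    unfolding rc using ijq by (rule bcirc_z_block_entry)
  ultimately show ?thesis
    using assms ijq
    by (simp add: dpart_qtprod_shifted jpart_qtprod_shifted distrib_left distrib_right
        sum.distrib algebra_simps)
qed

lemma qtprod_assoc:
  assumes "0 < n1" "0 < m" "0 < n2" "0 < n" "0 < n3" "i < n1" "j < n" "s < n3"
  shows "qtprod n1 n2 n n3 (qtprod n1 m n2 n3 A B) C i j s
    = qtprod n1 m n n3 A (qtprod m n2 n n3 B C) i j s"
proof -
  have r: "s * n1 + i < n1 * n3" and c: "j < n * n3"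
    using assms block_index_less[of 0 n3 j n] by (simp_all add: block_index_less)
  have "qtprod n1 n2 n n3 (qtprod n1 m n2 n3 A B) C i j s
      = mmul (n2 * n3) (bcirc_z n1 n2 n3 (qtprod n1 m n2 n3 A B)) (bcirc_z n2 n n3 C) (s * n1 + i) j"
    using assms by (simp add: qtprod_eq_mmul_bcirc_z)
  also have "\<dots> = mmul (n2 * n3) (mmul (m * n3) (bcirc_z n1 m n3 A) (bcirc_z m n2 n3 B))
      (bcirc_z n2 n n3 C) (s * n1 + i) j"
    using assms r by (intro mmul_cong) (simp_all add: bcirc_z_qtprod)
  also have "\<dots> = mmul (m * n3) (bcirc_z n1 m n3 A)
      (mmul (n2 * n3) (bcirc_z m n2 n3 B) (bcirc_z n2 n n3 C)) (s * n1 + i) j"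
    by (simp add: mmul_assoc)
  also have "\<dots> = mmul (m * n3) (bcirc_z n1 m n3 A) (bcirc_z m n n3 (qtprod m n2 n n3 B C)) (s * n1 + i) j"
    using assms c by (intro mmul_cong) (simp_all add: bcirc_z_qtprod)
  also have "\<dots> = qtprod n1 m n n3 A (qtprod m n2 n n3 B C) i j s"
    using assms by (simp add: qtprod_eq_mmul_bcirc_z)
  finally show ?thesis .
qed

lemma qtprod_add_right:
  "qtprod n1 m n2 n3 A (\<lambda>i j s. B i j s + C i j s)
    = (\<lambda>i j s. qtprod n1 m n2 n3 A B i j s + qtprod n1 m n2 n3 A C i j s)"
  by (simp add: qtprod_def tfold_def mmul_def tunfold_def distrib_left sum.distrib fun_eq_iff)

definition mconjT :: "(nat \<Rightarrow> nat \<Rightarrow> quat) \<Rightarrow> nat \<Rightarrow> nat \<Rightarrow> quat" where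
  "mconjT M = (\<lambda>r c. qconj (M c r))"

lemma mconjT_mmul: "mconjT (mmul k M N) = mmul k (mconjT N) (mconjT M)"
  by (simp add: mconjT_def mmul_def fun_eq_iff qconj_sum qconj_mult)

lemma of_cplx_cnj_qdpart: "of_cplx (cnj (qdpart a)) = dpart (qconj a)"
  and of_cplx_cnj_qcpart_mult_j: "of_cplx (cnj (qcpart a)) * qunit_j = - jpart (qconj a)"
  by (rule quat_eqI; simp add: qdpart_def qcpart_def)+

lemma qtconjT_entry:
  assumes b: "0 < b" and n3: "0 < n3" and "i < b" "s < n3"
  shows "qtconjT b n3 X i j s = dpart (qconj (X j i (cyc n3 (- int s)))) + jpart (qconj (X j i s))"
proof -
  have r: "s * b + i < b * n3"
    using assms by (simp add: block_index_less)
  have "block_reflect b n3 (s * b + i) = cyc n3 (- int s) * b + i"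
    using assms by (simp add: block_reflect_def)
  moreover have "(n3 - s) mod n3 = cyc n3 (- int s)"
    using nat_mod_diff_eq_cyc[of s n3 0] assms by simp
  moreover have "(n3 - cyc n3 (- int s)) mod n3 = s"
    using nat_mod_diff_eq_cyc[of "cyc n3 (- int s)" n3 0] assms
    by (simp add: cyc_less less_imp_le cyc_reduce cyc_of_nat)
  ultimately show ?thesis
    using assms
    by (simp add: qtconjT_def tfold_def mmul_kron_Pmat_left[OF b r] tunfold_def ctconjT_def
        tdpart_def tcpart_def of_cplx_cnj_qdpart of_cplx_cnj_qcpart_mult_j)
qed

lemma bcirc_z_qtconjT:
  assumes a: "0 < a" and b: "0 < b" and n3: "0 < n3" and r: "r < b * n3" and c: "c < a * n3"
  shows "bcirc_z b a n3 (qtconjT b n3 X) r c = mconjT (bcirc_z a b n3 X) r c"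
  using assms
  by (simp add: mconjT_def bcirc_z_entry[OF a n3 c] bcirc_z_entry[OF b n3 r] qtconjT_entry cyc_less
      qconj_add dpart_add jpart_add dpart_qconj jpart_qconj cyc_reduce add.commute)

lemma qtconjT_qtprod:
  assumes "0 < n1" "0 < m" "0 < n2" "0 < n3" "i < n2" "j < n1" "s < n3"
  shows "qtconjT n2 n3 (qtprod n1 m n2 n3 A B) i j s
    = qtprod n2 m n1 n3 (qtconjT n2 n3 B) (qtconjT m n3 A) i j s"
proof -
  have r: "s * n2 + i < n2 * n3" and c: "j < n1 * n3"
    using assms block_index_less[of 0 n3 j n1] by (simp_all add: block_index_less)
  have "qtconjT n2 n3 (qtprod n1 m n2 n3 A B) i j s
      = bcirc_z n2 n1 n3 (qtconjT n2 n3 (qtprod n1 m n2 n3 A B)) (s * n2 + i) j"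
    using assms by (simp add: bcirc_z_first_block_column)
  also have "\<dots> = mconjT (bcirc_z n1 n2 n3 (qtprod n1 m n2 n3 A B)) (s * n2 + i) j"
    using assms r c by (simp add: bcirc_z_qtconjT)
  also have "\<dots> = mconjT (mmul (m * n3) (bcirc_z n1 m n3 A) (bcirc_z m n2 n3 B)) (s * n2 + i) j"
    using assms r c by (simp add: mconjT_def bcirc_z_qtprod)
  also have "\<dots> = mmul (m * n3) (mconjT (bcirc_z m n2 n3 B)) (mconjT (bcirc_z n1 m n3 A)) (s * n2 + i) j"
    by (simp add: mconjT_mmul)
  also have "\<dots> = mmul (m * n3) (bcirc_z n2 m n3 (qtconjT n2 n3 B)) (bcirc_z m n1 n3 (qtconjT m n3 A))
      (s * n2 + i) j"
    using assms r c by (intro mmul_cong) (simp_all add: bcirc_z_qtconjT)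
  also have "\<dots> = qtprod n2 m n1 n3 (qtconjT n2 n3 B) (qtconjT m n3 A) i j s"
    using assms by (simp add: qtprod_eq_mmul_bcirc_z)
  finally show ?thesis .
qed

section \<open>Spectral norm and right eigenvalues of quaternion matrices\<close>

definition quat_coords :: "quat \<Rightarrow> real \<times> real \<times> real \<times> real" where
  "quat_coords a = (qre a, qi a, qj_c a, qk a)"

lemma qabs_eq_norm: "qabs a = norm (quat_coords a)"
  by (simp add: qabs_def quat_coords_def norm_Pair add.assoc)

lemma qabs_nonneg [simp]: "0 \<le> qabs a"
  by (simp add: qabs_def)

lemma qabs_0 [simp]: "qabs 0 = 0"
  by (simp add: qabs_def)

lemma qabs_eq_0_iff: "qabs a = 0 \<longleftrightarrow> a = 0"
  unfolding qabs_eq_norm quat_coords_def by (auto simp: zero_prod_def intro: quat_eqI)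

lemma qabs_add_le: "qabs (a + b) \<le> qabs a + qabs b"
  unfolding qabs_eq_norm using norm_triangle_ineq[of "quat_coords a" "quat_coords b"]
  by (simp add: quat_coords_def)

lemma qabs_sum_le: "qabs (sum f A) \<le> (\<Sum>x\<in>A. qabs (f x))"
proof (induction A rule: infinite_finite_induct)
  case (insert x F)
  then show ?case
    using qabs_add_le[of "f x" "sum f F"] by simp
qed (simp_all add: qabs_def)

lemma qabs_mult: "qabs (a * b) = qabs a * qabs b"
proof -
  have "(qre (a * b))\<^sup>2 + (qi (a * b))\<^sup>2 + (qj_c (a * b))\<^sup>2 + (qk (a * b))\<^sup>2
     = ((qre a)\<^sup>2 + (qi a)\<^sup>2 + (qj_c a)\<^sup>2 + (qk a)\<^sup>2) * ((qre b)\<^sup>2 + (qi b)\<^sup>2 + (qj_c b)\<^sup>2 + (qk b)\<^sup>2)"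
    by (simp add: power2_eq_square algebra_simps)
  then show ?thesis
    by (simp add: qabs_def real_sqrt_mult)
qed

definition quat_of_real :: "real \<Rightarrow> quat" where
  "quat_of_real c = Quat c 0 0 0"

lemma qabs_quat_of_real: "qabs (quat_of_real c) = \<bar>c\<bar>"
  by (simp add: qabs_def quat_of_real_def)

lemma vnorm_eq_L2_set: "vnorm n x = L2_set (\<lambda>i. qabs (x i)) {..<n}"
  by (simp add: vnorm_def L2_set_def)

lemma vnorm_nonneg: "0 \<le> vnorm n x"
  by (simp add: vnorm_eq_L2_set)

lemma vnorm_cong: "(\<And>i. i < n \<Longrightarrow> x i = y i) \<Longrightarrow> vnorm n x = vnorm n y"
  by (simp add: vnorm_def)

lemma vnorm_eq_0_iff: "vnorm n x = 0 \<longleftrightarrow> (\<forall>i<n. x i = 0)"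
  by (auto simp: vnorm_eq_L2_set L2_set_eq_0_iff qabs_eq_0_iff)

lemma vnorm_mult_right: "vnorm n (\<lambda>i. x i * c) = vnorm n x * qabs c"
  using L2_set_left_distrib[of "qabs c" "\<lambda>i. qabs (x i)" "{..<n}"]
  by (simp add: vnorm_eq_L2_set qabs_mult mult.commute)

lemma exists_unit_vector:
  assumes "0 < n"
  shows "\<exists>x. vnorm n x = 1"
proof
  have "(qabs (if i = 0 then 1 else 0))\<^sup>2 = (if i = 0 then 1 else 0)" for i :: nat
    by (simp add: qabs_def one_quat_def)
  then show "vnorm n (\<lambda>i. if i = 0 then 1 else 0) = 1"
    using assms by (simp add: vnorm_def)
qed

lemma mvmul_mult_right: "mvmul n M (\<lambda>i. x i * c) = (\<lambda>i. mvmul n M x i * c)"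
  by (simp add: mvmul_def sum_distrib_right mult.assoc fun_eq_iff)

lemma mvmul_mmul: "mvmul n (mmul k M N) x i = mvmul k M (mvmul n N x) i"
  by (simp add: mvmul_def mmul_def sum_distrib_left sum_distrib_right mult.assoc sum.swap[of _ "{..<k}"])

lemma vnorm_mvmul_le_frobenius:
  "vnorm m (mvmul n M x) \<le> L2_set (\<lambda>i. L2_set (\<lambda>l. qabs (M i l)) {..<n}) {..<m} * vnorm n x"
proof -
  have row: "qabs (mvmul n M x i) \<le> L2_set (\<lambda>l. qabs (M i l)) {..<n} * vnorm n x" for i
  proof -
    have "qabs (mvmul n M x i) \<le> (\<Sum>l<n. \<bar>qabs (M i l)\<bar> * \<bar>qabs (x l)\<bar>)"
      unfolding mvmul_def using qabs_sum_le[of "\<lambda>l. M i l * x l"] by (simp add: qabs_mult)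
    also have "\<dots> \<le> L2_set (\<lambda>l. qabs (M i l)) {..<n} * vnorm n x"
      unfolding vnorm_eq_L2_set by (rule L2_set_mult_ineq)
    finally show ?thesis .
  qed
  have "vnorm m (mvmul n M x) \<le> L2_set (\<lambda>i. L2_set (\<lambda>l. qabs (M i l)) {..<n} * vnorm n x) {..<m}"
    unfolding vnorm_eq_L2_set[of m] by (rule L2_set_mono) (simp_all add: row)
  also have "\<dots> = L2_set (\<lambda>i. L2_set (\<lambda>l. qabs (M i l)) {..<n}) {..<m} * vnorm n x"
    by (rule L2_set_left_distrib[OF vnorm_nonneg, symmetric])
  finally show ?thesis .
qed

lemma spec_norm_upper:
  assumes "vnorm n x = 1"
  shows "vnorm m (mvmul n M x) \<le> spec_norm m n M"
proof -
  let ?F = "L2_set (\<lambda>i. L2_set (\<lambda>l. qabs (M i l)) {..<n}) {..<m}"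
  have "y \<le> ?F" if "y \<in> {vnorm m (mvmul n M x) | x. vnorm n x = 1}" for y
  proof -
    from that obtain x where "y = vnorm m (mvmul n M x)" "vnorm n x = 1"
      by blast
    then show ?thesis
      using vnorm_mvmul_le_frobenius[of m n M x] by simp
  qed
  then have "bdd_above {vnorm m (mvmul n M x) | x. vnorm n x = 1}"
    by (rule bdd_aboveI)
  then show ?thesis
    unfolding spec_norm_def using assms by (intro cSup_upper) auto
qed

lemma spec_norm_least:
  "0 < n \<Longrightarrow> (\<And>x. vnorm n x = 1 \<Longrightarrow> vnorm m (mvmul n M x) \<le> K) \<Longrightarrow> spec_norm m n M \<le> K"
  unfolding spec_norm_def by (rule cSup_least) (use exists_unit_vector in auto)

lemma spec_norm_nonneg: "0 < n \<Longrightarrow> 0 \<le> spec_norm m n M"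
  using exists_unit_vector spec_norm_upper vnorm_nonneg order_trans by metis

lemma spec_norm_cong:
  "(\<And>r c. r < m \<Longrightarrow> c < n \<Longrightarrow> M r c = N r c) \<Longrightarrow> spec_norm m n M = spec_norm m n N"
  unfolding spec_norm_def by (simp add: vnorm_def mvmul_def)

lemma vnorm_mvmul_le:
  assumes "0 < n"
  shows "vnorm m (mvmul n M x) \<le> spec_norm m n M * vnorm n x"
proof (cases "vnorm n x = 0")
  case True
  then have "\<forall>i<n. x i = 0"
    by (simp add: vnorm_eq_0_iff)
  then have "\<forall>i. mvmul n M x i = 0"
    by (simp add: mvmul_def)
  then show ?thesis
    using True by (simp add: vnorm_def)
next
  case False
  define v where "v = vnorm n x"
  have v: "0 < v"
    using False vnorm_nonneg[of n x] unfolding v_def by linarith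
  define y where "y = (\<lambda>i. x i * quat_of_real (1 / v))"
  have "vnorm n y = 1"
    using v by (simp add: y_def vnorm_mult_right qabs_quat_of_real v_def[symmetric])
  then have "vnorm m (mvmul n M y) \<le> spec_norm m n M"
    by (rule spec_norm_upper)
  moreover have "vnorm m (mvmul n M y) = vnorm m (mvmul n M x) / v"
    using v by (simp add: y_def mvmul_mult_right vnorm_mult_right qabs_quat_of_real)
  ultimately show ?thesis
    using v by (simp add: v_def[symmetric] divide_le_eq)
qed

lemma spec_norm_mmul_le:
  assumes "0 < k" and "0 < n"
  shows "spec_norm m n (mmul k M N) \<le> spec_norm m k M * spec_norm k n N"
proof (rule spec_norm_least[OF \<open>0 < n\<close>])
  fix x assume x: "vnorm n x = 1"
  have "vnorm m (mvmul n (mmul k M N) x) = vnorm m (mvmul k M (mvmul n N x))"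
    by (simp add: mvmul_mmul[abs_def])
  also have "\<dots> \<le> spec_norm m k M * vnorm k (mvmul n N x)"
    by (rule vnorm_mvmul_le[OF \<open>0 < k\<close>])
  also have "\<dots> \<le> spec_norm m k M * (spec_norm k n N * vnorm n x)"
    by (rule mult_left_mono[OF vnorm_mvmul_le[OF \<open>0 < n\<close>] spec_norm_nonneg[OF \<open>0 < k\<close>]])
  finally show "vnorm m (mvmul n (mmul k M N) x) \<le> spec_norm m k M * spec_norm k n N"
    using x by simp
qed

lemma right_eigenvalue_qabs_le:
  assumes "0 < n" and "right_eigenvalue n M lam"
  shows "qabs lam \<le> spec_norm n n M"
proof -
  obtain x where x: "\<exists>i<n. x i \<noteq> 0" "\<forall>i<n. mvmul n M x i = x i * lam"
    using assms(2) unfolding right_eigenvalue_def by blast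
  have "0 < vnorm n x"
    using x(1) vnorm_eq_0_iff[of n x] vnorm_nonneg[of n x] by force
  moreover have "vnorm n x * qabs lam \<le> spec_norm n n M * vnorm n x"
    using vnorm_mvmul_le[OF assms(1), of n M x] vnorm_cong[of n "mvmul n M x"] x(2)
    by (simp add: vnorm_mult_right)
  ultimately show ?thesis
    by (simp add: mult.commute)
qed

text \<open>Writing a quaternion vector as \<open>u + j w\<close> with complex \<open>u, w\<close> turns \<open>M x = x \<lambda>\<close>
  for complex \<open>\<lambda>\<close> into an eigenproblem for the complex adjoint matrix.\<close>

definition qpair :: "complex \<Rightarrow> complex \<Rightarrow> quat" where
  "qpair u w = of_cplx u + qunit_j * of_cplx w"

lemma qpair_eq_0_iff: "qpair u w = 0 \<longleftrightarrow> u = 0 \<and> w = 0"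
  by (auto simp: qpair_def complex_eq_iff intro: quat_eqI dest: arg_cong[of _ _ qre]
      arg_cong[of _ _ qi] arg_cong[of _ _ qj_c] arg_cong[of _ _ qk])

lemma mult_qpair:
  "a * qpair u w = qpair (qdpart a * u - cnj (qcpart a) * w) (qcpart a * u + cnj (qdpart a) * w)"
  by (rule quat_eqI) (simp_all add: qpair_def qdpart_def qcpart_def algebra_simps)

lemma qpair_mult_of_cplx: "qpair u w * of_cplx k = qpair (u * k) (w * k)"
  by (rule quat_eqI) (simp_all add: qpair_def algebra_simps)

lemma qpair_sum: "(\<Sum>l\<in>A. qpair (f l) (g l)) = qpair (sum f A) (sum g A)"
  by (rule quat_eqI) (simp_all add: qpair_def sum_negf)

definition cplx_adjoint :: "nat \<Rightarrow> (nat \<Rightarrow> nat \<Rightarrow> quat) \<Rightarrow> complex Matrix.mat" where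
  "cplx_adjoint n M = Matrix.mat (2 * n) (2 * n) (\<lambda>(r, c).
     if r < n then (if c < n then qdpart (M r c) else - cnj (qcpart (M r (c - n))))
     else (if c < n then qcpart (M (r - n) c) else cnj (qdpart (M (r - n) (c - n)))))"

lemma mvmul_qpair_cplx_adjoint:
  assumes "dim_vec v = 2 * n" and "i < n"
  shows "mvmul n M (\<lambda>l. qpair (v $ l) (v $ (l + n))) i
    = qpair ((cplx_adjoint n M *\<^sub>v v) $ i) ((cplx_adjoint n M *\<^sub>v v) $ (i + n))"
proof -
  have split: "(\<Sum>c<2 * n. g c) = (\<Sum>l<n. g l) + (\<Sum>l<n. g (l + n))" for g :: "nat \<Rightarrow> complex"
    using sum_lessThan_blocks[where m = n and n = 2] by (simp add: mult.commute numeral_2_eq_2 add.commute)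
  show ?thesis
    using assms
    by (simp add: mvmul_def mult_qpair qpair_sum cplx_adjoint_def scalar_prod_def
        atLeast0LessThan split sum.distrib sum_subtractf sum_negf)
qed

lemma right_eigenvalue_exists:
  assumes "0 < n"
  shows "\<exists>lam. right_eigenvalue n M lam"
proof -
  have carrier: "cplx_adjoint n M \<in> carrier_mat (2 * n) (2 * n)"
    by (simp add: cplx_adjoint_def)
  then obtain k where "k \<in> spectrum (cplx_adjoint n M)"
    using spectrum_non_empty assms by fastforce
  then obtain v where v: "v \<in> carrier_vec (2 * n)" "v \<noteq> 0\<^sub>v (2 * n)"
    "cplx_adjoint n M *\<^sub>v v = k \<cdot>\<^sub>v v"
    using carrier by (auto simp: spectrum_def eigenvalue_def eigenvector_def)
  define x where "x l = qpair (v $ l) (v $ (l + n))" for l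
  obtain c where c: "c < 2 * n" "v $ c \<noteq> 0"
    using v(1,2) by (metis carrier_vecD eq_vecI index_zero_vec)
  have "x (c mod n) \<noteq> 0"
  proof (cases "c < n")
    case True
    then show ?thesis
      using c by (simp add: x_def qpair_eq_0_iff)
  next
    case False
    then have "c mod n + n = c"
      using c by (simp add: le_mod_geq)
    then show ?thesis
      using c by (simp add: x_def qpair_eq_0_iff)
  qed
  moreover have "mvmul n M x i = x i * of_cplx k" if "i < n" for i
    using mvmul_qpair_cplx_adjoint[of v n i M] v(1,3) that
    by (simp add: x_def[abs_def] qpair_mult_of_cplx mult.commute)
  ultimately have "right_eigenvalue n M (of_cplx k)"
    unfolding right_eigenvalue_def using assms by (metis mod_less_divisor)
  then show ?thesis ..
qed

lemma spec_radius_le_spec_norm: "0 < n \<Longrightarrow> spec_radius n M \<le> spec_norm n n M"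
  unfolding spec_radius_def
  by (rule cSup_least) (use right_eigenvalue_exists right_eigenvalue_qabs_le in auto)

theorem lemma2p15:
  fixes A B :: "quat tens" and n1 m n2 n3 :: nat
  assumes "0 < n1" and "0 < m" and "0 < n2" and "0 < n3"
  shows
   "(n1 = m \<longrightarrow> qt_radius m n3 A \<le> qt_norm n1 m n3 A)
  \<and> qt_norm n1 n2 n3 (qtprod n1 m n2 n3 A B) \<le> qt_norm n1 m n3 A * qt_norm m n2 n3 B
  \<and> (\<forall>i<n2. \<forall>j<n1. \<forall>s<n3.
        qtconjT n2 n3 (qtprod n1 m n2 n3 A B) i j s
      = qtprod n2 m n1 n3 (qtconjT n2 n3 B) (qtconjT m n3 A) i j s)
  \<and> (\<forall>(C :: quat tens) (n :: nat). 0 < n \<longrightarrow> (\<forall>i<n1. \<forall>j<n. \<forall>s<n3.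
        qtprod n1 n2 n n3 (qtprod n1 m n2 n3 A B) C i j s
      = qtprod n1 m n n3 A (qtprod m n2 n n3 B C) i j s))
  \<and> (\<forall>C :: quat tens. \<forall>i<n1. \<forall>j<n2. \<forall>s<n3.
        qtprod n1 m n2 n3 A (\<lambda>i' j' s'. B i' j' s' + C i' j' s') i j s
      = qtprod n1 m n2 n3 A B i j s + qtprod n1 m n2 n3 A C i j s)"
proof -
  have radius: "qt_radius m n3 A \<le> qt_norm m m n3 A"
    unfolding qt_radius_def qt_norm_def using assms by (simp add: spec_radius_le_spec_norm)
  have "qt_norm n1 n2 n3 (qtprod n1 m n2 n3 A B)
      = spec_norm (n1 * n3) (n2 * n3) (mmul (m * n3) (bcirc_z n1 m n3 A) (bcirc_z m n2 n3 B))"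
    unfolding qt_norm_def using assms by (intro spec_norm_cong) (simp add: bcirc_z_qtprod)
  also have "\<dots> \<le> qt_norm n1 m n3 A * qt_norm m n2 n3 B"
    unfolding qt_norm_def using assms by (simp add: spec_norm_mmul_le)
  finally show ?thesis
    using radius assms by (simp add: qtconjT_qtprod qtprod_assoc qtprod_add_right)
qed

end
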